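(* Fix $\eta>0$. Let $\mu^*\in\arg\min_{\mu\in\mathbb{L}_2}\langle C,\mu\rangle$, let $\lambda\in\mathbb{R}^{2md}$, let $\hat\mu=\mathrm{Proj}(\mu^\lambda)\in\mathbb{L}_2$, and let $\delta=\max_{e\in E,i\in e}\|\nu^\lambda_{e,i}\|_1$. Then $$\langle C,\hat\mu-\mu^*\rangle\le16(m+n)d\|C\|_\infty\delta+4\|C\|_\infty\sum_{e\in E,i\in e}\|\nu^\lambda_{e,i}\|_1+\frac{n\log d+2m\log d}{\eta}.$$
   Context: Let $G=(V,E)$ be a finite undirected graph with $n=|V|$, $m=|E|$, every vertex incident to at least one edge; $N_i=\{e\in E:i\in e\}$. $\chi$ is a finite label set with $d=|\chi|\ge2$. Costs $C_i\in\mathbb{R}^\chi$, $C_e\in\mathbb{R}^{\chi^2}$; $\|C\|_\infty$ is the largest absolute entry; for $e=\{i,j\}$ (with fixed orientation), $x_e=(x_i,x_j)$, $(x_e)_i=x_i$. $\langle C,\mu\rangle=\sum_i\sum_xC_i(x)\mu_i(x)+\sum_e\sum_{x_e}C_e(x_e)\mu_e(x_e)$. $\mathbb{L}_2=\{\mu\ge0:\mu_i\in\Sigma^d\ \forall i,\ \sum_{x_e:(x_e)_i=x}\mu_e(x_e)=\mu_i(x)\ \forall e,\,i\in e,\,x\}$, $\Sigma^d$ the probability simplex on $\chi$. For $\lambda\in\mathbb{R}^{2md}$ (indexed by $(e,i,x)$): $\mu^\lambda_i(x)\propto\exp(-\eta C_i(x)+\eta\sum_{e\in N_i}\lambda_{e,i}(x))$,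 $\mu^\lambda_e(x_e)\propto\exp(-\eta C_e(x_e)-\eta\sum_{i\in e}\lambda_{e,i}((x_e)_i))$, each normalized; $S^\lambda_{e,i}(x)=\sum_{x_e:(x_e)_i=x}\mu^\lambda_e(x_e)$; slack $\nu^\lambda_{e,i}=S^\lambda_{e,i}-\mu^\lambda_i$. Rounding map: for $F\in\mathbb{R}_{>0}^{\chi\times\chi}$ and $r,c\in\Sigma^d$, with $r(F),c(F)$ the row/column sums, let $F'=\mathrm{diag}(a)F$ with $a(x)=\min\{r(x)/r(F)(x),1\}$, $F''=F'\mathrm{diag}(b)$ with $b(x)=\min\{c(x)/c(F')(x),1\}$, $\mathrm{err}_r=r-r(F'')$, $\mathrm{err}_c=c-c(F'')$, output $F''+\mathrm{err}_r\mathrm{err}_c^\top/\|\mathrm{err}_c\|_1$ (or $F''$ if $\mathrm{err}_c=0$). $\mathrm{Proj}(\mu^\lambda)$: $\hat\mu_i=\mu^\lambda_i$, and for $e=\{i,j\}$, $\hat\mu_e$ is the rounding of $\mu^\lambda_e$ (rows indexed by $x_i$, columns by $x_j$) with $r=\mu^\lambda_i$, $c=\mu^\lambda_j$. *)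

theory Defs
  imports Complex_Main
begin

(* Graph: vertex set V, edge set E of ordered pairs (fixed orientation of each
   undirected edge {i,j}); simple, loop-free, each undirected edge stored once,
   every vertex incident to some edge. *)
definition graph_ok :: "'v set \<Rightarrow> ('v \<times> 'v) set \<Rightarrow> bool" where
  "graph_ok V E \<longleftrightarrow> finite V \<and> E \<subseteq> V \<times> V \<and>
     (\<forall>(i,j)\<in>E. i \<noteq> j \<and> (j,i) \<notin> E) \<and>
     (\<forall>i\<in>V. \<exists>e\<in>E. fst e = i \<or> snd e = i)"

definition nbr :: "('v \<times> 'v) set \<Rightarrow> 'v \<Rightarrow> ('v \<times> 'v) set" where
  "nbr E i = {e\<in>E. fst e = i \<or> snd e = i}"

definition cost_norm :: "'v set \<Rightarrow> ('v \<times> 'v) set \<Rightarrow> ('v \<Rightarrow> 'x::finite \<Rightarrow> real)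
     \<Rightarrow> ('v \<times> 'v \<Rightarrow> 'x \<Rightarrow> 'x \<Rightarrow> real) \<Rightarrow> real" where
  "cost_norm V E Ci Ce = Max ({\<bar>Ci i x\<bar> | i x. i \<in> V} \<union> {\<bar>Ce e x y\<bar> | e x y. e \<in> E})"

definition cost :: "'v set \<Rightarrow> ('v \<times> 'v) set \<Rightarrow> ('v \<Rightarrow> 'x::finite \<Rightarrow> real)
     \<Rightarrow> ('v \<times> 'v \<Rightarrow> 'x \<Rightarrow> 'x \<Rightarrow> real)
     \<Rightarrow> ('v \<Rightarrow> 'x \<Rightarrow> real) \<Rightarrow> ('v \<times> 'v \<Rightarrow> 'x \<Rightarrow> 'x \<Rightarrow> real) \<Rightarrow> real" where
  "cost V E Ci Ce mv me =
     (\<Sum>i\<in>V. \<Sum>x\<in>UNIV. Ci i x * mv i x) + (\<Sum>e\<in>E. \<Sum>x\<in>UNIV. \<Sum>y\<in>UNIV. Ce e x y * me e x y)"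

definition simplex :: "('x::finite \<Rightarrow> real) \<Rightarrow> bool" where
  "simplex p \<longleftrightarrow> (\<forall>x. p x \<ge> 0) \<and> (\<Sum>x\<in>UNIV. p x) = 1"

(* local polytope L_2; for e = (i,j), rows of mu_e are indexed by x_i, columns by x_j *)
definition L2 :: "'v set \<Rightarrow> ('v \<times> 'v) set
     \<Rightarrow> ('v \<Rightarrow> 'x::finite \<Rightarrow> real) \<Rightarrow> ('v \<times> 'v \<Rightarrow> 'x \<Rightarrow> 'x \<Rightarrow> real) \<Rightarrow> bool" where
  "L2 V E mv me \<longleftrightarrow>
     (\<forall>i\<in>V. simplex (mv i)) \<and>
     (\<forall>e\<in>E. \<forall>x y. me e x y \<ge> 0) \<and>
     (\<forall>e\<in>E. \<forall>x. (\<Sum>y\<in>UNIV. me e x y) = mv (fst e) x) \<and>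
     (\<forall>e\<in>E. \<forall>y. (\<Sum>x\<in>UNIV. me e x y) = mv (snd e) y)"

(* mu^lambda; lam e i x = lambda_{e,i}(x) *)
definition mu_lam_v :: "real \<Rightarrow> ('v \<times> 'v) set \<Rightarrow> ('v \<Rightarrow> 'x::finite \<Rightarrow> real)
     \<Rightarrow> ('v \<times> 'v \<Rightarrow> 'v \<Rightarrow> 'x \<Rightarrow> real) \<Rightarrow> 'v \<Rightarrow> 'x \<Rightarrow> real" where
  "mu_lam_v \<eta> E Ci lam i x =
     exp (- \<eta> * Ci i x + \<eta> * (\<Sum>e\<in>nbr E i. lam e i x)) /
     (\<Sum>z\<in>UNIV. exp (- \<eta> * Ci i z + \<eta> * (\<Sum>e\<in>nbr E i. lam e i z)))"

definition mu_lam_e :: "real \<Rightarrow> ('v \<times> 'v \<Rightarrow> 'x::finite \<Rightarrow> 'x \<Rightarrow> real)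
     \<Rightarrow> ('v \<times> 'v \<Rightarrow> 'v \<Rightarrow> 'x \<Rightarrow> real) \<Rightarrow> 'v \<times> 'v \<Rightarrow> 'x \<Rightarrow> 'x \<Rightarrow> real" where
  "mu_lam_e \<eta> Ce lam e x y =
     exp (- \<eta> * Ce e x y - \<eta> * (lam e (fst e) x + lam e (snd e) y)) /
     (\<Sum>z\<in>UNIV. \<Sum>w\<in>UNIV. exp (- \<eta> * Ce e z w - \<eta> * (lam e (fst e) z + lam e (snd e) w)))"

definition S_lam :: "real \<Rightarrow> ('v \<times> 'v \<Rightarrow> 'x::finite \<Rightarrow> 'x \<Rightarrow> real)
     \<Rightarrow> ('v \<times> 'v \<Rightarrow> 'v \<Rightarrow> 'x \<Rightarrow> real) \<Rightarrow> 'v \<times> 'v \<Rightarrow> 'v \<Rightarrow> 'x \<Rightarrow> real" where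
  "S_lam \<eta> Ce lam e i x =
     (if i = fst e then (\<Sum>y\<in>UNIV. mu_lam_e \<eta> Ce lam e x y)
      else (\<Sum>y\<in>UNIV. mu_lam_e \<eta> Ce lam e y x))"

definition slack_norm :: "real \<Rightarrow> ('v \<times> 'v) set \<Rightarrow> ('v \<Rightarrow> 'x::finite \<Rightarrow> real)
     \<Rightarrow> ('v \<times> 'v \<Rightarrow> 'x \<Rightarrow> 'x \<Rightarrow> real) \<Rightarrow> ('v \<times> 'v \<Rightarrow> 'v \<Rightarrow> 'x \<Rightarrow> real)
     \<Rightarrow> 'v \<times> 'v \<Rightarrow> 'v \<Rightarrow> real" where
  "slack_norm \<eta> E Ci Ce lam e i =
     (\<Sum>x\<in>UNIV. \<bar>S_lam \<eta> Ce lam e i x - mu_lam_v \<eta> E Ci lam i x\<bar>)"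

definition round_map :: "('x::finite \<Rightarrow> 'x \<Rightarrow> real) \<Rightarrow> ('x \<Rightarrow> real) \<Rightarrow> ('x \<Rightarrow> real)
     \<Rightarrow> 'x \<Rightarrow> 'x \<Rightarrow> real" where
  "round_map F r c =
    (let a = (\<lambda>x. min (r x / (\<Sum>y\<in>UNIV. F x y)) 1);
         F1 = (\<lambda>x y. a x * F x y);
         b = (\<lambda>y. min (c y / (\<Sum>x\<in>UNIV. F1 x y)) 1);
         F2 = (\<lambda>x y. F1 x y * b y);
         err_r = (\<lambda>x. r x - (\<Sum>y\<in>UNIV. F2 x y));
         err_c = (\<lambda>y. c y - (\<Sum>x\<in>UNIV. F2 x y))
     in if (\<forall>y. err_c y = 0) then F2
        else (\<lambda>x y. F2 x y + err_r x * err_c y / (\<Sum>z\<in>UNIV. \<bar>err_c z\<bar>)))"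

definition proj_v :: "real \<Rightarrow> ('v \<times> 'v) set \<Rightarrow> ('v \<Rightarrow> 'x::finite \<Rightarrow> real)
     \<Rightarrow> ('v \<times> 'v \<Rightarrow> 'v \<Rightarrow> 'x \<Rightarrow> real) \<Rightarrow> 'v \<Rightarrow> 'x \<Rightarrow> real" where
  "proj_v \<eta> E Ci lam = mu_lam_v \<eta> E Ci lam"

definition proj_e :: "real \<Rightarrow> ('v \<times> 'v) set \<Rightarrow> ('v \<Rightarrow> 'x::finite \<Rightarrow> real)
     \<Rightarrow> ('v \<times> 'v \<Rightarrow> 'x \<Rightarrow> 'x \<Rightarrow> real) \<Rightarrow> ('v \<times> 'v \<Rightarrow> 'v \<Rightarrow> 'x \<Rightarrow> real)
     \<Rightarrow> 'v \<times> 'v \<Rightarrow> 'x \<Rightarrow> 'x \<Rightarrow> real" where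
  "proj_e \<eta> E Ci Ce lam e =
     round_map (mu_lam_e \<eta> Ce lam e) (mu_lam_v \<eta> E Ci lam (fst e)) (mu_lam_v \<eta> E Ci lam (snd e))"

end

theory Submission
  imports Defs
begin

(* The vertex and edge parts of mu^lambda are Gibbs distributions for the costs shifted by the
   multipliers lambda.  Hence, against any nonnegative point whose marginals have the same slacks
   nu^lambda as mu^lambda, the cost of mu^lambda is larger by at most the entropy range
   (n + 2 m) ln d / eta; the multiplier terms cancel exactly because the slacks agree.  A point of L2
   becomes such a point after mixing in the uniform distribution with weight t = 2 d delta and adding
   nu^lambda, which changes its cost by at most ||C|| (2 t (n + m) + sum ||nu||); for t > 1 the
   estimate is trivial anyway.  Finally, rounding moves each edge part of mu^lambda by at most twice
   its slacks in l1. *)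

section \<open>Entropy and Gibbs distributions\<close>

lemma entropy_le_ln_card:
  assumes "finite A" and pos: "\<And>x. x \<in> A \<Longrightarrow> p x > 0" and sum1: "sum p A = 1"
  shows "- (\<Sum>x\<in>A. p x * ln (p x)) \<le> ln (card A)"
proof -
  define N where "N = real (card A)"
  have "N > 0" using assms by (auto simp: N_def card_gt_0_iff)
  have pointwise: "- (p x * ln (p x)) \<le> p x * ln N + (1 / N - p x)" if "x \<in> A" for x
  proof -
    have px: "p x > 0" using pos that .
    have "ln (1 / (N * p x)) \<le> 1 / (N * p x) - 1"
      using px \<open>N > 0\<close> by (intro ln_le_minus_one) simp
    then have "p x * (- ln N - ln (p x)) \<le> p x * (1 / (N * p x) - 1)"
      using px \<open>N > 0\<close> by (intro mult_left_mono) (simp_all add: ln_div ln_mult)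
    moreover have "p x * (1 / (N * p x) - 1) = 1 / N - p x" using px \<open>N > 0\<close> by (simp add: field_simps)
    ultimately show ?thesis by (simp add: algebra_simps)
  qed
  have "- (\<Sum>x\<in>A. p x * ln (p x)) \<le> (\<Sum>x\<in>A. p x * ln N + (1 / N - p x))"
    unfolding sum_negf[symmetric] by (intro sum_mono pointwise)
  also have "\<dots> = ln N" using sum1 \<open>N > 0\<close>
    by (simp add: sum.distrib sum_subtractf sum_distrib_right[symmetric] N_def)
  finally show ?thesis by (simp add: N_def)
qed

lemma gibbs_expectation_gap_le:
  fixes a :: "'a \<Rightarrow> real"
  assumes "finite A" and "\<eta> > 0"
    and p: "\<And>x. x \<in> A \<Longrightarrow> p x = exp (- \<eta> * a x) / (\<Sum>z\<in>A. exp (- \<eta> * a z))"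
    and q0: "\<And>x. x \<in> A \<Longrightarrow> q x \<ge> 0" and q1: "sum q A = 1"
  shows "(\<Sum>x\<in>A. a x * (p x - q x)) \<le> ln (card A) / \<eta>"
proof -
  define Z where "Z = (\<Sum>z\<in>A. exp (- \<eta> * a z))"
  have "A \<noteq> {}" using q1 by auto
  then have "Z > 0" unfolding Z_def using \<open>finite A\<close> by (intro sum_pos) auto
  have p_pos: "p x > 0" if "x \<in> A" for x using p[OF that] \<open>Z > 0\<close> by (simp add: Z_def)
  have p_le_1: "p x \<le> 1" if "x \<in> A" for x
    using p[OF that] \<open>Z > 0\<close> member_le_sum[OF that, of "\<lambda>z. exp (- \<eta> * a z)"] \<open>finite A\<close>
    by (simp add: Z_def)
  have p1: "sum p A = 1"
    using \<open>Z > 0\<close> by (simp add: p sum_divide_distrib[symmetric] Z_def)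
  \<comment> \<open>\<open>\<eta> a = - ln p - ln Z\<close> on \<open>A\<close>, and the \<open>ln Z\<close> terms cancel since \<open>p\<close> and \<open>q\<close> have equal mass\<close>
  have ln_p: "ln (p x) = - \<eta> * a x - ln Z" if "x \<in> A" for x
    using p[OF that] \<open>Z > 0\<close> by (simp add: ln_div Z_def)
  have "\<eta> * (\<Sum>x\<in>A. a x * (p x - q x))
      = (\<Sum>x\<in>A. - (p x * ln (p x)) + q x * ln (p x) - ln Z * (p x - q x))"
    unfolding sum_distrib_left by (intro sum.cong refl) (simp add: ln_p algebra_simps)
  also have "\<dots> = - (\<Sum>x\<in>A. p x * ln (p x)) + (\<Sum>x\<in>A. q x * ln (p x)) - ln Z * (sum p A - sum q A)"
    by (simp add: sum.distrib sum_subtractf sum_negf sum_distrib_left right_diff_distrib)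
  also have "\<dots> = - (\<Sum>x\<in>A. p x * ln (p x)) + (\<Sum>x\<in>A. q x * ln (p x))"
    using p1 q1 by simp
  also have "\<dots> \<le> ln (card A) + 0"
  proof (rule add_mono)
    show "- (\<Sum>x\<in>A. p x * ln (p x)) \<le> ln (card A)"
      using entropy_le_ln_card[of A p] \<open>finite A\<close> p_pos p1 by blast
    show "(\<Sum>x\<in>A. q x * ln (p x)) \<le> 0"
      using p_pos p_le_1 q0 by (intro sum_nonpos mult_nonneg_nonpos) auto
  qed
  finally show ?thesis using \<open>\<eta> > 0\<close> by (simp add: field_simps mult.commute)
qed

section \<open>Rounding a joint distribution onto prescribed marginals\<close>

definition clip_rows :: "('a \<Rightarrow> 'b::finite \<Rightarrow> real) \<Rightarrow> ('a \<Rightarrow> real) \<Rightarrow> 'a \<Rightarrow> 'b \<Rightarrow> real" where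
  "clip_rows F r x y = min (r x / (\<Sum>y'\<in>UNIV. F x y')) 1 * F x y"

definition clip_cols :: "('a::finite \<Rightarrow> 'b \<Rightarrow> real) \<Rightarrow> ('b \<Rightarrow> real) \<Rightarrow> 'a \<Rightarrow> 'b \<Rightarrow> real" where
  "clip_cols F c x y = clip_rows (\<lambda>y x. F x y) c y x"

lemma min_div_mult_eq_min:
  fixes R r :: real
  assumes "0 \<le> R" "0 \<le> r"
  shows "min (r / R) 1 * R = min R r"
  using assms by (cases "R = 0") (auto simp: min_def field_simps)

lemma clip_rows_nonneg: "(\<And>x y. F x y \<ge> 0) \<Longrightarrow> (\<And>x. r x \<ge> 0) \<Longrightarrow> clip_rows F r x y \<ge> 0"
  unfolding clip_rows_def by (simp add: sum_nonneg)

lemma clip_rows_le: "(\<And>x y. F x y \<ge> 0) \<Longrightarrow> (\<And>x. r x \<ge> 0) \<Longrightarrow> clip_rows F r x y \<le> F x y"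
  unfolding clip_rows_def by (simp add: mult_left_le_one_le sum_nonneg)

lemma sum_clip_rows:
  "(\<And>x y. F x y \<ge> 0) \<Longrightarrow> (\<And>x. r x \<ge> 0) \<Longrightarrow>
    (\<Sum>y\<in>UNIV. clip_rows F r x y) = min (\<Sum>y\<in>UNIV. F x y) (r x)"
  unfolding clip_rows_def by (simp add: sum_distrib_left[symmetric] min_div_mult_eq_min sum_nonneg)

lemma clip_cols_nonneg: "(\<And>x y. F x y \<ge> 0) \<Longrightarrow> (\<And>y. c y \<ge> 0) \<Longrightarrow> clip_cols F c x y \<ge> 0"
  unfolding clip_cols_def by (rule clip_rows_nonneg)

lemma clip_cols_le: "(\<And>x y. F x y \<ge> 0) \<Longrightarrow> (\<And>y. c y \<ge> 0) \<Longrightarrow> clip_cols F c x y \<le> F x y"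
  unfolding clip_cols_def by (rule clip_rows_le)

lemma sum_clip_cols:
  "(\<And>x y. F x y \<ge> 0) \<Longrightarrow> (\<And>y. c y \<ge> 0) \<Longrightarrow>
    (\<Sum>x\<in>UNIV. clip_cols F c x y) = min (\<Sum>x\<in>UNIV. F x y) (c y)"
  unfolding clip_cols_def by (rule sum_clip_rows)

(* If the column error vanishes, the correction term is 0 / 0 = 0, so no case split is needed. *)
lemma round_map_eq:
  fixes F :: "'x::finite \<Rightarrow> 'x \<Rightarrow> real" and r c :: "'x \<Rightarrow> real"
  defines "G \<equiv> clip_cols (clip_rows F r) c"
  shows "round_map F r c = (\<lambda>x y. G x y + (r x - (\<Sum>y'\<in>UNIV. G x y')) * (c y - (\<Sum>x'\<in>UNIV. G x' y))
      / (\<Sum>y'\<in>UNIV. \<bar>c y' - (\<Sum>x'\<in>UNIV. G x' y')\<bar>))"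
  by (auto simp: round_map_def G_def clip_cols_def clip_rows_def Let_def fun_eq_iff mult.commute)

lemma clip_mass_deficit_le:
  fixes F :: "'a::finite \<Rightarrow> 'b::finite \<Rightarrow> real"
  assumes F0: "\<And>x y. F x y \<ge> 0" and r0: "\<And>x. r x \<ge> 0" and c0: "\<And>y. c y \<ge> 0"
  shows "(\<Sum>x\<in>UNIV. \<Sum>y\<in>UNIV. F x y - clip_cols (clip_rows F r) c x y)
    \<le> (\<Sum>x\<in>UNIV. \<bar>(\<Sum>y\<in>UNIV. F x y) - r x\<bar>) + (\<Sum>y\<in>UNIV. \<bar>(\<Sum>x\<in>UNIV. F x y) - c y\<bar>)"
proof -
  define F1 where "F1 = clip_rows F r"
  have F1: "0 \<le> F1 x y" "F1 x y \<le> F x y" for x y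
    unfolding F1_def using F0 r0 by (auto intro: clip_rows_nonneg clip_rows_le)
  have "(\<Sum>x\<in>UNIV. \<Sum>y\<in>UNIV. F x y - clip_cols F1 c x y)
      = (\<Sum>x\<in>UNIV. \<Sum>y\<in>UNIV. F x y - F1 x y) + (\<Sum>x\<in>UNIV. \<Sum>y\<in>UNIV. F1 x y - clip_cols F1 c x y)"
    by (simp add: sum.distrib[symmetric])
  also have "\<dots> = (\<Sum>x\<in>UNIV. (\<Sum>y\<in>UNIV. F x y) - min (\<Sum>y\<in>UNIV. F x y) (r x))
          + (\<Sum>y\<in>UNIV. (\<Sum>x\<in>UNIV. F1 x y) - min (\<Sum>x\<in>UNIV. F1 x y) (c y))"
    using F0 r0 F1 c0 unfolding F1_def
    by (subst (2) sum.swap) (simp add: sum_subtractf sum_clip_rows sum_clip_cols)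
  also have "\<dots> \<le> (\<Sum>x\<in>UNIV. \<bar>(\<Sum>y\<in>UNIV. F x y) - r x\<bar>) + (\<Sum>y\<in>UNIV. \<bar>(\<Sum>x\<in>UNIV. F x y) - c y\<bar>)"
  proof (intro add_mono sum_mono)
    show "(\<Sum>y\<in>UNIV. F x y) - min (\<Sum>y\<in>UNIV. F x y) (r x) \<le> \<bar>(\<Sum>y\<in>UNIV. F x y) - r x\<bar>" for x
      by linarith
    have col: "(\<Sum>x\<in>UNIV. F1 x y) \<le> (\<Sum>x\<in>UNIV. F x y)" for y by (intro sum_mono F1(2))
    show "(\<Sum>x\<in>UNIV. F1 x y) - min (\<Sum>x\<in>UNIV. F1 x y) (c y) \<le> \<bar>(\<Sum>x\<in>UNIV. F x y) - c y\<bar>" for y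
      unfolding min_def using col[of y] by auto
  qed
  finally show ?thesis unfolding F1_def .
qed

lemma round_map_l1_dist_le:
  fixes F :: "'x::finite \<Rightarrow> 'x \<Rightarrow> real"
  assumes F0: "\<And>x y. F x y \<ge> 0" and r0: "\<And>x. r x \<ge> 0" and c0: "\<And>y. c y \<ge> 0"
    and mass: "(\<Sum>x\<in>UNIV. r x) = (\<Sum>x\<in>UNIV. \<Sum>y\<in>UNIV. F x y)"
  shows "(\<Sum>x\<in>UNIV. \<Sum>y\<in>UNIV. \<bar>round_map F r c x y - F x y\<bar>)
    \<le> 2 * ((\<Sum>x\<in>UNIV. \<bar>(\<Sum>y\<in>UNIV. F x y) - r x\<bar>) + (\<Sum>y\<in>UNIV. \<bar>(\<Sum>x\<in>UNIV. F x y) - c y\<bar>))"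
proof -
  define G where "G = clip_cols (clip_rows F r) c"
  define er where "er x = r x - (\<Sum>y\<in>UNIV. G x y)" for x
  define ec where "ec y = c y - (\<Sum>x\<in>UNIV. G x y)" for y
  define S where "S = (\<Sum>y\<in>UNIV. \<bar>ec y\<bar>)"
  define T where "T = (\<Sum>x\<in>UNIV. \<Sum>y\<in>UNIV. F x y - G x y)"
  have R: "0 \<le> clip_rows F r x y" "clip_rows F r x y \<le> F x y" for x y
    using F0 r0 by (auto intro: clip_rows_nonneg clip_rows_le)
  have G: "0 \<le> G x y" "G x y \<le> clip_rows F r x y" for x y
    unfolding G_def using R(1) c0 by (auto intro: clip_cols_nonneg clip_cols_le)
  have er0: "er x \<ge> 0" for x
    using sum_mono[of UNIV "G x" "clip_rows F r x"] G(2) sum_clip_rows[of F r x] F0 r0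
    by (simp add: er_def)
  have ec0: "ec y \<ge> 0" for y
    using sum_clip_cols[of "clip_rows F r" c y] c0 F0 r0
    by (simp add: ec_def G_def clip_rows_nonneg)
  have "(\<Sum>x\<in>UNIV. \<Sum>y\<in>UNIV. \<bar>round_map F r c x y - F x y\<bar>)
      \<le> (\<Sum>x\<in>UNIV. \<Sum>y\<in>UNIV. (F x y - G x y) + er x * ec y / S)"
  proof (intro sum_mono)
    fix x y
    have "round_map F r c x y - F x y = er x * ec y / S - (F x y - G x y)"
      by (simp add: round_map_eq er_def ec_def S_def G_def)
    moreover have "er x * ec y / S \<ge> 0" using er0 ec0 by (simp add: S_def sum_nonneg)
    moreover have "F x y - G x y \<ge> 0" using G(2)[of x y] R(2)[of x y] by linarith
    ultimately show "\<bar>round_map F r c x y - F x y\<bar> \<le> (F x y - G x y) + er x * ec y / S"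
      by linarith
  qed
  also have "\<dots> = T + (\<Sum>x\<in>UNIV. er x * ((\<Sum>y\<in>UNIV. ec y) / S))"
    by (simp add: T_def sum.distrib sum_distrib_left sum_divide_distrib)
  also have "\<dots> \<le> T + (\<Sum>x\<in>UNIV. er x)"
    using ec0 er0 by (intro add_left_mono sum_mono mult_left_le) (auto simp: S_def)
  also have "\<dots> = 2 * T"
    using mass by (simp add: er_def T_def sum_subtractf)
  also have "\<dots> \<le> 2 * ((\<Sum>x\<in>UNIV. \<bar>(\<Sum>y\<in>UNIV. F x y) - r x\<bar>) + (\<Sum>y\<in>UNIV. \<bar>(\<Sum>x\<in>UNIV. F x y) - c y\<bar>))"
    using clip_mass_deficit_le[of F r c] F0 r0 c0 by (simp add: T_def G_def)
  finally show ?thesis .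
qed

section \<open>Mixing with the uniform distribution\<close>

lemma card_UNIV_pos: "card (UNIV :: 'a::finite set) > 0"
  by (simp add: card_gt_0_iff)

definition mix_uniform :: "real \<Rightarrow> ('x::finite \<Rightarrow> real) \<Rightarrow> 'x \<Rightarrow> real" where
  "mix_uniform t p x = (1 - t) * p x + t / card (UNIV :: 'x set)"

definition shift_joint :: "real \<Rightarrow> ('x::finite \<Rightarrow> 'y::finite \<Rightarrow> real) \<Rightarrow> ('x \<Rightarrow> real) \<Rightarrow> ('y \<Rightarrow> real)
    \<Rightarrow> 'x \<Rightarrow> 'y \<Rightarrow> real" where
  "shift_joint t P u w x y = (1 - t) * P x y + t / (real (card (UNIV :: 'x set)) * card (UNIV :: 'y set))
     + u x / card (UNIV :: 'y set) + w y / card (UNIV :: 'x set)"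

lemma simplex_mix_uniform:
  assumes "simplex p" "0 \<le> t" "t \<le> 1"
  shows "simplex (mix_uniform t p)"
  using assms card_UNIV_pos[where 'a = 'a]
  by (simp add: simplex_def mix_uniform_def sum.distrib sum_distrib_left[symmetric])

lemma l1_mix_uniform_le:
  fixes p :: "'x::finite \<Rightarrow> real"
  assumes "simplex p" "0 \<le> t"
  shows "(\<Sum>x\<in>UNIV. \<bar>mix_uniform t p x - p x\<bar>) \<le> 2 * t"
proof -
  have "(\<Sum>x\<in>UNIV. \<bar>mix_uniform t p x - p x\<bar>) \<le> (\<Sum>x\<in>UNIV. t * p x + t / card (UNIV :: 'x set))"
  proof (rule sum_mono)
    fix x
    have "mix_uniform t p x - p x = t / card (UNIV :: 'x set) - t * p x"
      by (simp add: mix_uniform_def algebra_simps)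
    moreover have "t * p x \<ge> 0" "t / card (UNIV :: 'x set) \<ge> 0" using assms by (simp_all add: simplex_def)
    ultimately show "\<bar>mix_uniform t p x - p x\<bar> \<le> t * p x + t / card (UNIV :: 'x set)"
      by linarith
  qed
  also have "\<dots> = 2 * t"
    using assms card_UNIV_pos[where 'a = 'x]
    by (simp add: simplex_def sum.distrib sum_distrib_left[symmetric])
  finally show ?thesis .
qed

lemma sum_shift_joint_row:
  fixes P :: "'x::finite \<Rightarrow> 'y::finite \<Rightarrow> real"
  assumes "(\<Sum>y\<in>UNIV. w y) = 0"
  shows "(\<Sum>y\<in>UNIV. shift_joint t P u w x y) = mix_uniform t (\<lambda>x. \<Sum>y\<in>UNIV. P x y) x + u x"
  using assms card_UNIV_pos[where 'a = 'y]
  by (simp add: shift_joint_def mix_uniform_def sum.distrib sum_distrib_left[symmetric]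
      sum_divide_distrib[symmetric])

lemma sum_shift_joint_col:
  fixes P :: "'x::finite \<Rightarrow> 'y::finite \<Rightarrow> real"
  assumes "(\<Sum>x\<in>UNIV. u x) = 0"
  shows "(\<Sum>x\<in>UNIV. shift_joint t P u w x y) = mix_uniform t (\<lambda>y. \<Sum>x\<in>UNIV. P x y) y + w y"
  using assms card_UNIV_pos[where 'a = 'x]
  by (simp add: shift_joint_def mix_uniform_def sum.distrib sum_distrib_left[symmetric]
      sum_divide_distrib[symmetric])

lemma shift_joint_nonneg:
  fixes P :: "'x::finite \<Rightarrow> 'y::finite \<Rightarrow> real" and u :: "'x \<Rightarrow> real" and w :: "'y \<Rightarrow> real"
  assumes "P x y \<ge> 0" "t \<le> 1"
    and "2 * card (UNIV :: 'x set) * \<bar>u x\<bar> \<le> t" and "2 * card (UNIV :: 'y set) * \<bar>w y\<bar> \<le> t"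
  shows "shift_joint t P u w x y \<ge> 0"
proof -
  define dx where "dx = real (card (UNIV :: 'x set))"
  define dy where "dy = real (card (UNIV :: 'y set))"
  have "dx > 0" "dy > 0" by (simp_all add: dx_def dy_def card_UNIV_pos)
  have "\<bar>u x / dy\<bar> \<le> t / (2 * dx * dy)" "\<bar>w y / dx\<bar> \<le> t / (2 * dx * dy)"
    using assms(3,4) \<open>dx > 0\<close> \<open>dy > 0\<close> by (simp_all add: dx_def dy_def field_simps)
  moreover have "(1 - t) * P x y \<ge> 0" using assms(1,2) by simp
  moreover have "t / (dx * dy) = 2 * (t / (2 * dx * dy))" by simp
  ultimately show ?thesis
    unfolding shift_joint_def dx_def[symmetric] dy_def[symmetric] by linarith
qed

lemma l1_shift_joint_le:
  fixes P :: "'x::finite \<Rightarrow> 'y::finite \<Rightarrow> real"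
  assumes "\<And>x y. P x y \<ge> 0" "0 \<le> t"
  shows "(\<Sum>x\<in>UNIV. \<Sum>y\<in>UNIV. \<bar>shift_joint t P u w x y - P x y\<bar>)
    \<le> t * (\<Sum>x\<in>UNIV. \<Sum>y\<in>UNIV. P x y) + t + (\<Sum>x\<in>UNIV. \<bar>u x\<bar>) + (\<Sum>y\<in>UNIV. \<bar>w y\<bar>)"
proof -
  define dx where "dx = real (card (UNIV :: 'x set))"
  define dy where "dy = real (card (UNIV :: 'y set))"
  have "dx > 0" "dy > 0" by (simp_all add: dx_def dy_def card_UNIV_pos)
  have "(\<Sum>x\<in>UNIV. \<Sum>y\<in>UNIV. \<bar>shift_joint t P u w x y - P x y\<bar>)
      \<le> (\<Sum>x\<in>UNIV. \<Sum>y\<in>UNIV. t * P x y + t / (dx * dy) + \<bar>u x\<bar> / dy + \<bar>w y\<bar> / dx)"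
  proof (intro sum_mono)
    fix x y
    have "shift_joint t P u w x y - P x y = t / (dx * dy) + u x / dy + w y / dx - t * P x y"
      by (simp add: shift_joint_def dx_def dy_def algebra_simps)
    moreover have "t * P x y \<ge> 0" "t / (dx * dy) \<ge> 0" using assms \<open>dx > 0\<close> \<open>dy > 0\<close> by simp_all
    moreover have "\<bar>u x / dy\<bar> = \<bar>u x\<bar> / dy" "\<bar>w y / dx\<bar> = \<bar>w y\<bar> / dx"
      using \<open>dx > 0\<close> \<open>dy > 0\<close> by simp_all
    ultimately show "\<bar>shift_joint t P u w x y - P x y\<bar> \<le> t * P x y + t / (dx * dy) + \<bar>u x\<bar> / dy + \<bar>w y\<bar> / dx"
      by linarith
  qed
  also have "\<dots> = t * (\<Sum>x\<in>UNIV. \<Sum>y\<in>UNIV. P x y) + t + (\<Sum>x\<in>UNIV. \<bar>u x\<bar>) + (\<Sum>y\<in>UNIV. \<bar>w y\<bar>)"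
    using \<open>dx > 0\<close> \<open>dy > 0\<close>
    by (simp add: sum.distrib sum_distrib_left[symmetric] sum_divide_distrib[symmetric] dx_def dy_def)
  finally show ?thesis .
qed

section \<open>Costs on a graph\<close>

lemma graph_ok_finite:
  assumes "graph_ok V E"
  shows "finite V" "finite E"
  using assms finite_subset[OF _ finite_cartesian_product] by (auto simp: graph_ok_def)

lemma graph_ok_edge:
  assumes "graph_ok V E" "e \<in> E"
  shows "fst e \<in> V" "snd e \<in> V" "fst e \<noteq> snd e"
  using assms unfolding graph_ok_def by (auto split: prod.splits dest!: subsetD)

lemma sum_nbr_swap:
  assumes G: "graph_ok V E"
  shows "(\<Sum>i\<in>V. \<Sum>e\<in>nbr E i. f e i) = (\<Sum>e\<in>E. f e (fst e) + f e (snd e))"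
proof -
  have "(\<Sum>i\<in>V. \<Sum>e\<in>nbr E i. f e i) = (\<Sum>e\<in>E. \<Sum>i\<in>{i. i \<in> V \<and> (fst e = i \<or> snd e = i)}. f e i)"
    unfolding nbr_def using graph_ok_finite[OF G] by (rule sum.swap_restrict)
  also have "\<dots> = (\<Sum>e\<in>E. f e (fst e) + f e (snd e))"
  proof (rule sum.cong[OF refl])
    fix e assume "e \<in> E"
    then have "{i. i \<in> V \<and> (fst e = i \<or> snd e = i)} = {fst e, snd e}" "fst e \<noteq> snd e"
      using graph_ok_edge[OF G \<open>e \<in> E\<close>] by auto
    then show "(\<Sum>i\<in>{i. i \<in> V \<and> (fst e = i \<or> snd e = i)}. f e i) = f e (fst e) + f e (snd e)"
      by simp
  qed
  finally show ?thesis .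
qed

lemma multiplier_pairing_eq:
  fixes lam :: "'v \<times> 'v \<Rightarrow> 'v \<Rightarrow> 'x::finite \<Rightarrow> real"
  assumes G: "graph_ok V E"
    and row: "\<And>e x. e \<in> E \<Longrightarrow> (\<Sum>y\<in>UNIV. De e x y) = Dv (fst e) x"
    and col: "\<And>e y. e \<in> E \<Longrightarrow> (\<Sum>x\<in>UNIV. De e x y) = Dv (snd e) y"
  shows "(\<Sum>i\<in>V. \<Sum>x\<in>UNIV. (\<Sum>e\<in>nbr E i. lam e i x) * Dv i x)
    = (\<Sum>e\<in>E. \<Sum>x\<in>UNIV. \<Sum>y\<in>UNIV. (lam e (fst e) x + lam e (snd e) y) * De e x y)"
proof -
  have "(\<Sum>i\<in>V. \<Sum>x\<in>UNIV. (\<Sum>e\<in>nbr E i. lam e i x) * Dv i x)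
      = (\<Sum>i\<in>V. \<Sum>e\<in>nbr E i. \<Sum>x\<in>UNIV. lam e i x * Dv i x)"
    unfolding sum_distrib_right by (intro sum.cong refl sum.swap)
  also have "\<dots> = (\<Sum>e\<in>E. (\<Sum>x\<in>UNIV. lam e (fst e) x * Dv (fst e) x)
                          + (\<Sum>y\<in>UNIV. lam e (snd e) y * Dv (snd e) y))"
    by (rule sum_nbr_swap[OF G])
  also have "\<dots> = (\<Sum>e\<in>E. \<Sum>x\<in>UNIV. \<Sum>y\<in>UNIV. (lam e (fst e) x + lam e (snd e) y) * De e x y)"
  proof (rule sum.cong[OF refl])
    fix e assume "e \<in> E"
    have "(\<Sum>x\<in>UNIV. \<Sum>y\<in>UNIV. (lam e (fst e) x + lam e (snd e) y) * De e x y)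
        = (\<Sum>x\<in>UNIV. lam e (fst e) x * (\<Sum>y\<in>UNIV. De e x y))
          + (\<Sum>y\<in>UNIV. lam e (snd e) y * (\<Sum>x\<in>UNIV. De e x y))"
      by (simp add: distrib_right sum.distrib sum_distrib_left sum.swap[of "\<lambda>x y. lam e (snd e) y * De e x y"])
    then show "(\<Sum>x\<in>UNIV. lam e (fst e) x * Dv (fst e) x) + (\<Sum>y\<in>UNIV. lam e (snd e) y * Dv (snd e) y)
        = (\<Sum>x\<in>UNIV. \<Sum>y\<in>UNIV. (lam e (fst e) x + lam e (snd e) y) * De e x y)"
      using row[OF \<open>e \<in> E\<close>] col[OF \<open>e \<in> E\<close>] by simp
  qed
  finally show ?thesis .
qed

lemma cost_diff:
  "cost V E Ci Ce mv me - cost V E Ci Ce mv' me'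
    = cost V E Ci Ce (\<lambda>i x. mv i x - mv' i x) (\<lambda>e x y. me e x y - me' e x y)"
  unfolding cost_def by (simp add: right_diff_distrib sum_subtractf)

lemma abs_cost_le:
  fixes K :: real
  assumes "\<And>i x. i \<in> V \<Longrightarrow> \<bar>Ci i x\<bar> \<le> K" and "\<And>e x y. e \<in> E \<Longrightarrow> \<bar>Ce e x y\<bar> \<le> K"
  shows "\<bar>cost V E Ci Ce mv me\<bar>
    \<le> K * ((\<Sum>i\<in>V. \<Sum>x\<in>UNIV. \<bar>mv i x\<bar>) + (\<Sum>e\<in>E. \<Sum>x\<in>UNIV. \<Sum>y\<in>UNIV. \<bar>me e x y\<bar>))"
proof -
  have "\<bar>cost V E Ci Ce mv me\<bar>
      \<le> (\<Sum>i\<in>V. \<Sum>x\<in>UNIV. \<bar>Ci i x\<bar> * \<bar>mv i x\<bar>) + (\<Sum>e\<in>E. \<Sum>x\<in>UNIV. \<Sum>y\<in>UNIV. \<bar>Ce e x y\<bar> * \<bar>me e x y\<bar>)"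
    unfolding cost_def abs_mult[symmetric]
    by (intro order_trans[OF abs_triangle_ineq] add_mono order_trans[OF sum_abs] sum_mono) auto
  also have "\<dots> \<le> (\<Sum>i\<in>V. \<Sum>x\<in>UNIV. K * \<bar>mv i x\<bar>) + (\<Sum>e\<in>E. \<Sum>x\<in>UNIV. \<Sum>y\<in>UNIV. K * \<bar>me e x y\<bar>)"
    using assms by (intro add_mono sum_mono mult_right_mono) auto
  finally show ?thesis by (simp add: sum_distrib_left distrib_left)
qed

lemma abs_cost_distribution_le:
  fixes K :: real
  assumes K: "\<And>i x. i \<in> V \<Longrightarrow> \<bar>Ci i x\<bar> \<le> K" "\<And>e x y. e \<in> E \<Longrightarrow> \<bar>Ce e x y\<bar> \<le> K"
    and mv: "\<And>i. i \<in> V \<Longrightarrow> simplex (mv i)"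
    and me: "\<And>e x y. e \<in> E \<Longrightarrow> me e x y \<ge> 0" "\<And>e. e \<in> E \<Longrightarrow> (\<Sum>x\<in>UNIV. \<Sum>y\<in>UNIV. me e x y) = 1"
  shows "\<bar>cost V E Ci Ce mv me\<bar> \<le> (real (card V) + real (card E)) * K"
proof -
  have "(\<Sum>i\<in>V. \<Sum>x\<in>UNIV. \<bar>mv i x\<bar>) = card V" "(\<Sum>e\<in>E. \<Sum>x\<in>UNIV. \<Sum>y\<in>UNIV. \<bar>me e x y\<bar>) = card E"
    using mv me by (simp_all add: simplex_def)
  moreover have "\<bar>cost V E Ci Ce mv me\<bar>
      \<le> K * ((\<Sum>i\<in>V. \<Sum>x\<in>UNIV. \<bar>mv i x\<bar>) + (\<Sum>e\<in>E. \<Sum>x\<in>UNIV. \<Sum>y\<in>UNIV. \<bar>me e x y\<bar>))"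
    using K by (rule abs_cost_le)
  ultimately show ?thesis by (simp add: algebra_simps)
qed

lemma L2_edge_mass:
  assumes "graph_ok V E" "L2 V E mv me" "e \<in> E"
  shows "(\<Sum>x\<in>UNIV. \<Sum>y\<in>UNIV. me e x y) = 1"
  using assms graph_ok_edge(1)[OF assms(1,3)] by (simp add: L2_def simplex_def)

lemma cost_norm_ge:
  assumes "graph_ok V E"
  shows "i \<in> V \<Longrightarrow> \<bar>Ci i x\<bar> \<le> cost_norm V E Ci Ce" and "e \<in> E \<Longrightarrow> \<bar>Ce e x y\<bar> \<le> cost_norm V E Ci Ce"
proof -
  have "{\<bar>Ci i x\<bar> | i x. i \<in> V} \<subseteq> (\<lambda>(i, x). \<bar>Ci i x\<bar>) ` (V \<times> UNIV)"
    by force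
  then have "finite {\<bar>Ci i x\<bar> | i x. i \<in> V}"
    by (rule finite_subset) (simp add: graph_ok_finite[OF assms])
  moreover have "{\<bar>Ce e x y\<bar> | e x y. e \<in> E} \<subseteq> (\<lambda>(e, x, y). \<bar>Ce e x y\<bar>) ` (E \<times> UNIV \<times> UNIV)"
    by clarify (rule rev_image_eqI[of "(e, x, y)" for e x y], auto)
  then have "finite {\<bar>Ce e x y\<bar> | e x y. e \<in> E}"
    by (rule finite_subset) (simp add: graph_ok_finite[OF assms])
  ultimately have fin: "finite ({\<bar>Ci i x\<bar> | i x. i \<in> V} \<union> {\<bar>Ce e x y\<bar> | e x y. e \<in> E})"
    by (rule finite_UnI)
  show "i \<in> V \<Longrightarrow> \<bar>Ci i x\<bar> \<le> cost_norm V E Ci Ce"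
    unfolding cost_norm_def by (rule Max_ge[OF fin]) blast
  show "e \<in> E \<Longrightarrow> \<bar>Ce e x y\<bar> \<le> cost_norm V E Ci Ce"
    unfolding cost_norm_def by (rule Max_ge[OF fin]) blast
qed

section \<open>The Gibbs point and its slacks\<close>

lemma mu_lam_v_pos: "mu_lam_v \<eta> E Ci lam i x > 0"
  unfolding mu_lam_v_def by (intro divide_pos_pos exp_gt_zero sum_pos) auto

lemma sum_mu_lam_v: "(\<Sum>x\<in>UNIV. mu_lam_v \<eta> E Ci lam i x) = 1"
proof -
  have "(\<Sum>z\<in>UNIV. exp (- \<eta> * Ci i z + \<eta> * (\<Sum>e\<in>nbr E i. lam e i z))) > 0"
    by (intro sum_pos) auto
  then show ?thesis unfolding mu_lam_v_def by (simp add: sum_divide_distrib[symmetric])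
qed

lemma mu_lam_e_pos: "mu_lam_e \<eta> Ce lam e x y > 0"
  unfolding mu_lam_e_def by (intro divide_pos_pos exp_gt_zero sum_pos) auto

lemma sum_mu_lam_e: "(\<Sum>x\<in>UNIV. \<Sum>y\<in>UNIV. mu_lam_e \<eta> Ce lam e x y) = 1"
proof -
  have "(\<Sum>z\<in>UNIV. \<Sum>w\<in>UNIV. exp (- \<eta> * Ce e z w - \<eta> * (lam e (fst e) z + lam e (snd e) w))) > 0"
    by (intro sum_pos) auto
  then show ?thesis unfolding mu_lam_e_def by (simp add: sum_divide_distrib[symmetric])
qed

lemma sum_S_lam: "(\<Sum>x\<in>UNIV. S_lam \<eta> Ce lam e i x) = 1"
  using sum_mu_lam_e[of \<eta> Ce lam e] sum.swap[of "\<lambda>x y. mu_lam_e \<eta> Ce lam e y x" UNIV UNIV]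
  by (cases "i = fst e") (simp_all add: S_lam_def)

lemma sum_slack_eq_0: "(\<Sum>x\<in>UNIV. S_lam \<eta> Ce lam e i x - mu_lam_v \<eta> E Ci lam i x) = 0"
  by (simp add: sum_subtractf sum_S_lam sum_mu_lam_v)

lemma abs_slack_le_slack_norm:
  "\<bar>S_lam \<eta> Ce lam e i x - mu_lam_v \<eta> E Ci lam i x\<bar> \<le> slack_norm \<eta> E Ci Ce lam e i"
  unfolding slack_norm_def by (rule member_le_sum) auto

lemma slack_norm_nonneg: "slack_norm \<eta> E Ci Ce lam e i \<ge> 0"
  unfolding slack_norm_def by (simp add: sum_nonneg)

lemma slack_norm_le_Max:
  assumes "graph_ok V E" "e \<in> E" "i = fst e \<or> i = snd e"
  shows "slack_norm \<eta> E Ci Ce lam e i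
    \<le> Max {slack_norm \<eta> E Ci Ce lam e i | e i. e \<in> E \<and> (i = fst e \<or> i = snd e)}"
proof (rule Max_ge)
  have "{slack_norm \<eta> E Ci Ce lam e i | e i. e \<in> E \<and> (i = fst e \<or> i = snd e)}
      \<subseteq> (\<lambda>e. slack_norm \<eta> E Ci Ce lam e (fst e)) ` E \<union> (\<lambda>e. slack_norm \<eta> E Ci Ce lam e (snd e)) ` E"
    by blast
  then show "finite {slack_norm \<eta> E Ci Ce lam e i | e i. e \<in> E \<and> (i = fst e \<or> i = snd e)}"
    by (rule finite_subset) (simp add: graph_ok_finite(2)[OF assms(1)])
qed (use assms(2,3) in blast)

lemma sum_UNIV_pair: "(\<Sum>p\<in>UNIV. f p) = (\<Sum>x\<in>UNIV. \<Sum>y\<in>UNIV. f (x, y))"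
  for f :: "'a::finite \<times> 'b::finite \<Rightarrow> 'c::comm_monoid_add"
  by (simp add: sum.cartesian_product flip: UNIV_Times_UNIV)

lemma mu_lam_v_gap_le:
  fixes Ci :: "'v \<Rightarrow> 'x::finite \<Rightarrow> real"
  assumes "\<eta> > 0" and "simplex q"
  shows "(\<Sum>x\<in>UNIV. (Ci i x - (\<Sum>e\<in>nbr E i. lam e i x)) * (mu_lam_v \<eta> E Ci lam i x - q x))
    \<le> ln (card (UNIV :: 'x set)) / \<eta>"
  using assms
  by (intro gibbs_expectation_gap_le) (auto simp: mu_lam_v_def simplex_def algebra_simps)

lemma mu_lam_e_gap_le:
  fixes Ce :: "'v \<times> 'v \<Rightarrow> 'x::finite \<Rightarrow> 'x \<Rightarrow> real"
  assumes "\<eta> > 0" and "\<And>x y. q x y \<ge> 0" and "(\<Sum>x\<in>UNIV. \<Sum>y\<in>UNIV. q x y) = 1"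
  shows "(\<Sum>x\<in>UNIV. \<Sum>y\<in>UNIV. (Ce e x y + lam e (fst e) x + lam e (snd e) y)
      * (mu_lam_e \<eta> Ce lam e x y - q x y)) \<le> 2 * ln (card (UNIV :: 'x set)) / \<eta>"
proof -
  have "(\<Sum>p\<in>UNIV. (\<lambda>(x, y). Ce e x y + lam e (fst e) x + lam e (snd e) y) p
      * ((\<lambda>(x, y). mu_lam_e \<eta> Ce lam e x y) p - (\<lambda>(x, y). q x y) p))
    \<le> ln (card (UNIV :: ('x \<times> 'x) set)) / \<eta>"
    using assms
    by (intro gibbs_expectation_gap_le) (auto simp: mu_lam_e_def sum_UNIV_pair algebra_simps)
  moreover have "ln (card (UNIV :: ('x \<times> 'x) set)) = 2 * ln (card (UNIV :: 'x set))"
    by (simp add: card_cartesian_product ln_mult flip: UNIV_Times_UNIV)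
  ultimately show ?thesis by (simp add: sum_UNIV_pair)
qed

lemma cost_mu_lam_le_same_slack:
  fixes Ci :: "'v \<Rightarrow> 'x::finite \<Rightarrow> real"
  assumes G: "graph_ok V E" and "\<eta> > 0"
    and mq: "\<And>i. i \<in> V \<Longrightarrow> simplex (mq i)"
    and eq0: "\<And>e x y. e \<in> E \<Longrightarrow> eq e x y \<ge> 0"
    and eq1: "\<And>e. e \<in> E \<Longrightarrow> (\<Sum>x\<in>UNIV. \<Sum>y\<in>UNIV. eq e x y) = 1"
    and row: "\<And>e x. e \<in> E \<Longrightarrow> (\<Sum>y\<in>UNIV. eq e x y) - mq (fst e) x
                = S_lam \<eta> Ce lam e (fst e) x - mu_lam_v \<eta> E Ci lam (fst e) x"
    and col: "\<And>e y. e \<in> E \<Longrightarrow> (\<Sum>x\<in>UNIV. eq e x y) - mq (snd e) y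
                = S_lam \<eta> Ce lam e (snd e) y - mu_lam_v \<eta> E Ci lam (snd e) y"
  shows "cost V E Ci Ce (mu_lam_v \<eta> E Ci lam) (mu_lam_e \<eta> Ce lam) - cost V E Ci Ce mq eq
    \<le> (real (card V) + 2 * real (card E)) * ln (card (UNIV :: 'x set)) / \<eta>"
proof -
  define Dv where "Dv i x = mu_lam_v \<eta> E Ci lam i x - mq i x" for i x
  define De where "De e x y = mu_lam_e \<eta> Ce lam e x y - eq e x y" for e x y
  define L where "L i x = (\<Sum>e\<in>nbr E i. lam e i x)" for i x
  have pairing: "(\<Sum>i\<in>V. \<Sum>x\<in>UNIV. L i x * Dv i x)
      = (\<Sum>e\<in>E. \<Sum>x\<in>UNIV. \<Sum>y\<in>UNIV. (lam e (fst e) x + lam e (snd e) y) * De e x y)"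
    unfolding L_def
  proof (rule multiplier_pairing_eq[OF G])
    show "(\<Sum>y\<in>UNIV. De e x y) = Dv (fst e) x" if "e \<in> E" for e x
      using row[OF that, of x] by (simp add: De_def Dv_def S_lam_def sum_subtractf)
    show "(\<Sum>x\<in>UNIV. De e x y) = Dv (snd e) y" if "e \<in> E" for e y
      using col[OF that, of y] graph_ok_edge(3)[OF G that]
      by (simp add: De_def Dv_def S_lam_def sum_subtractf)
  qed
  \<comment> \<open>the multiplier terms enter the vertex and edge Gibbs gaps with opposite signs and cancel\<close>
  have "cost V E Ci Ce (mu_lam_v \<eta> E Ci lam) (mu_lam_e \<eta> Ce lam) - cost V E Ci Ce mq eq
      = cost V E Ci Ce Dv De"
    unfolding cost_diff Dv_def De_def ..
  also have "\<dots> = (\<Sum>i\<in>V. \<Sum>x\<in>UNIV. (Ci i x - L i x) * Dv i x)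
        + (\<Sum>e\<in>E. \<Sum>x\<in>UNIV. \<Sum>y\<in>UNIV. (Ce e x y + lam e (fst e) x + lam e (snd e) y) * De e x y)"
    using pairing by (simp add: cost_def left_diff_distrib distrib_right sum_subtractf sum.distrib)
  also have "\<dots> \<le> (\<Sum>i\<in>V. ln (card (UNIV :: 'x set)) / \<eta>) + (\<Sum>e\<in>E. 2 * ln (card (UNIV :: 'x set)) / \<eta>)"
    unfolding Dv_def De_def L_def using \<open>\<eta> > 0\<close> mq eq0 eq1
    by (intro add_mono sum_mono mu_lam_v_gap_le mu_lam_e_gap_le) auto
  also have "\<dots> = (real (card V) + 2 * real (card E)) * ln (card (UNIV :: 'x set)) / \<eta>"
    by (simp add: algebra_simps add_divide_distrib)
  finally show ?thesis .
qed

lemma same_slack_point_near_L2: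
  fixes V :: "'v set" and E :: "('v \<times> 'v) set"
    and Ci :: "'v \<Rightarrow> 'x::finite \<Rightarrow> real" and Ce :: "'v \<times> 'v \<Rightarrow> 'x \<Rightarrow> 'x \<Rightarrow> real"
    and \<eta> :: real and lam :: "'v \<times> 'v \<Rightarrow> 'v \<Rightarrow> 'x \<Rightarrow> real" and t :: real
  defines "sn \<equiv> slack_norm \<eta> E Ci Ce lam"
  assumes G: "graph_ok V E" and L2: "L2 V E mv me" and t: "0 \<le> t" "t \<le> 1"
    and sn_le: "\<And>e i. e \<in> E \<Longrightarrow> i = fst e \<or> i = snd e \<Longrightarrow> 2 * real (card (UNIV :: 'x set)) * sn e i \<le> t"
  obtains mq eq where "\<And>i. i \<in> V \<Longrightarrow> simplex (mq i)"
    and "\<And>e x y. e \<in> E \<Longrightarrow> eq e x y \<ge> 0" and "\<And>e. e \<in> E \<Longrightarrow> (\<Sum>x\<in>UNIV. \<Sum>y\<in>UNIV. eq e x y) = 1"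
    and "\<And>e x. e \<in> E \<Longrightarrow> (\<Sum>y\<in>UNIV. eq e x y) - mq (fst e) x
          = S_lam \<eta> Ce lam e (fst e) x - mu_lam_v \<eta> E Ci lam (fst e) x"
    and "\<And>e y. e \<in> E \<Longrightarrow> (\<Sum>x\<in>UNIV. eq e x y) - mq (snd e) y
          = S_lam \<eta> Ce lam e (snd e) y - mu_lam_v \<eta> E Ci lam (snd e) y"
    and "\<And>i. i \<in> V \<Longrightarrow> (\<Sum>x\<in>UNIV. \<bar>mq i x - mv i x\<bar>) \<le> 2 * t"
    and "\<And>e. e \<in> E \<Longrightarrow> (\<Sum>x\<in>UNIV. \<Sum>y\<in>UNIV. \<bar>eq e x y - me e x y\<bar>) \<le> 2 * t + sn e (fst e) + sn e (snd e)"
proof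
  \<comment> \<open>Mix \<open>(mv, me)\<close> with the uniform point, then add the slack \<open>\<nu>\<^sup>\<lambda>\<close> spread evenly over the
    other coordinate; the uniform mass \<open>t\<close> is what keeps the result nonnegative.\<close>
  define nu where "nu e i x = S_lam \<eta> Ce lam e i x - mu_lam_v \<eta> E Ci lam i x" for e i x
  define mq where "mq i = mix_uniform t (mv i)" for i
  define eq where "eq e = shift_joint t (me e) (nu e (fst e)) (nu e (snd e))" for e
  have mv: "simplex (mv i)" if "i \<in> V" for i using L2 that by (simp add: L2_def)
  have me0: "me e x y \<ge> 0" and me_row: "(\<Sum>y\<in>UNIV. me e x y) = mv (fst e) x"
    and me_col: "(\<Sum>x\<in>UNIV. me e x y) = mv (snd e) y" if "e \<in> E" for e x y
    using L2 that by (simp_all add: L2_def)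
  have sum_nu: "(\<Sum>x\<in>UNIV. nu e i x) = 0" for e i
    unfolding nu_def by (rule sum_slack_eq_0)
  have eq_row: "(\<Sum>y\<in>UNIV. eq e x y) = mq (fst e) x + nu e (fst e) x" if "e \<in> E" for e x
    using me_row[OF that] by (simp add: eq_def mq_def sum_shift_joint_row sum_nu)
  have eq_col: "(\<Sum>x\<in>UNIV. eq e x y) = mq (snd e) y + nu e (snd e) y" if "e \<in> E" for e y
    using me_col[OF that] by (simp add: eq_def mq_def sum_shift_joint_col sum_nu)
  show mq: "simplex (mq i)" if "i \<in> V" for i
    using mv[OF that] t by (simp add: mq_def simplex_mix_uniform)
  show "eq e x y \<ge> 0" if "e \<in> E" for e x y
  proof -
    have "2 * card (UNIV :: 'x set) * \<bar>nu e i x\<bar> \<le> t" if "i = fst e \<or> i = snd e" for i x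
    proof -
      have "\<bar>nu e i x\<bar> \<le> sn e i" unfolding nu_def sn_def by (rule abs_slack_le_slack_norm)
      then have "2 * real (card (UNIV :: 'x set)) * \<bar>nu e i x\<bar> \<le> 2 * real (card (UNIV :: 'x set)) * sn e i"
        by (intro mult_left_mono) simp_all
      then show ?thesis using sn_le[OF \<open>e \<in> E\<close> that] by simp
    qed
    then show ?thesis unfolding eq_def using me0[OF that] t by (intro shift_joint_nonneg) auto
  qed
  show "(\<Sum>x\<in>UNIV. \<Sum>y\<in>UNIV. eq e x y) = 1" if "e \<in> E" for e
    using mq[OF graph_ok_edge(1)[OF G that]] sum_nu
    by (simp add: eq_row[OF that] sum.distrib simplex_def)
  show "(\<Sum>y\<in>UNIV. eq e x y) - mq (fst e) x = S_lam \<eta> Ce lam e (fst e) x - mu_lam_v \<eta> E Ci lam (fst e) x"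
    and "(\<Sum>x\<in>UNIV. eq e x y) - mq (snd e) y = S_lam \<eta> Ce lam e (snd e) y - mu_lam_v \<eta> E Ci lam (snd e) y"
    if "e \<in> E" for e x y
    using that by (simp_all add: eq_row eq_col nu_def)
  show "(\<Sum>x\<in>UNIV. \<bar>mq i x - mv i x\<bar>) \<le> 2 * t" if "i \<in> V" for i
    unfolding mq_def using mv[OF that] t(1) by (rule l1_mix_uniform_le)
  show "(\<Sum>x\<in>UNIV. \<Sum>y\<in>UNIV. \<bar>eq e x y - me e x y\<bar>) \<le> 2 * t + sn e (fst e) + sn e (snd e)"
    if "e \<in> E" for e
    using l1_shift_joint_le[of "me e" t "nu e (fst e)" "nu e (snd e)"] me0[OF that] t
      L2_edge_mass[OF G L2 that]
    by (simp add: eq_def sn_def slack_norm_def nu_def)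
qed

lemma cost_mu_lam_sub_L2_le_small_slack:
  fixes V :: "'v set" and E :: "('v \<times> 'v) set"
    and Ci :: "'v \<Rightarrow> 'x::finite \<Rightarrow> real" and Ce :: "'v \<times> 'v \<Rightarrow> 'x \<Rightarrow> 'x \<Rightarrow> real"
    and \<eta> :: real and lam :: "'v \<times> 'v \<Rightarrow> 'v \<Rightarrow> 'x \<Rightarrow> real" and K d \<delta> :: real
  defines "d \<equiv> real (card (UNIV :: 'x set))" and "sn \<equiv> slack_norm \<eta> E Ci Ce lam"
  assumes G: "graph_ok V E" and "\<eta> > 0" and L2: "L2 V E mv me"
    and K: "\<And>i x. i \<in> V \<Longrightarrow> \<bar>Ci i x\<bar> \<le> K" "\<And>e x y. e \<in> E \<Longrightarrow> \<bar>Ce e x y\<bar> \<le> K"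
    and "0 \<le> K"
    and \<delta>: "\<And>e i. e \<in> E \<Longrightarrow> i = fst e \<or> i = snd e \<Longrightarrow> sn e i \<le> \<delta>"
    and "0 \<le> \<delta>" and small: "2 * d * \<delta> \<le> 1"
  shows "cost V E Ci Ce (mu_lam_v \<eta> E Ci lam) (mu_lam_e \<eta> Ce lam) - cost V E Ci Ce mv me
    \<le> 4 * d * \<delta> * (real (card V) + real (card E)) * K + K * (\<Sum>e\<in>E. sn e (fst e) + sn e (snd e))
       + (real (card V) + 2 * real (card E)) * ln d / \<eta>"
proof -
  define t where "t = 2 * d * \<delta>"
  have t: "0 \<le> t" "t \<le> 1" using small \<open>0 \<le> \<delta>\<close> by (simp_all add: t_def d_def)
  have sn_le: "2 * real (card (UNIV :: 'x set)) * sn e i \<le> t" if "e \<in> E" "i = fst e \<or> i = snd e" for e i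
    using \<delta>[OF that] by (auto simp: t_def d_def intro: mult_left_mono)
  obtain mq eq where mq: "\<And>i. i \<in> V \<Longrightarrow> simplex (mq i)"
    and eq: "\<And>e x y. e \<in> E \<Longrightarrow> eq e x y \<ge> 0" "\<And>e. e \<in> E \<Longrightarrow> (\<Sum>x\<in>UNIV. \<Sum>y\<in>UNIV. eq e x y) = 1"
    and slack: "\<And>e x. e \<in> E \<Longrightarrow> (\<Sum>y\<in>UNIV. eq e x y) - mq (fst e) x
          = S_lam \<eta> Ce lam e (fst e) x - mu_lam_v \<eta> E Ci lam (fst e) x"
      "\<And>e y. e \<in> E \<Longrightarrow> (\<Sum>x\<in>UNIV. eq e x y) - mq (snd e) y
          = S_lam \<eta> Ce lam e (snd e) y - mu_lam_v \<eta> E Ci lam (snd e) y"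
    and dist: "\<And>i. i \<in> V \<Longrightarrow> (\<Sum>x\<in>UNIV. \<bar>mq i x - mv i x\<bar>) \<le> 2 * t"
      "\<And>e. e \<in> E \<Longrightarrow> (\<Sum>x\<in>UNIV. \<Sum>y\<in>UNIV. \<bar>eq e x y - me e x y\<bar>) \<le> 2 * t + sn e (fst e) + sn e (snd e)"
    using same_slack_point_near_L2[OF G L2 t sn_le[unfolded sn_def]] unfolding sn_def by blast
  have "cost V E Ci Ce (mu_lam_v \<eta> E Ci lam) (mu_lam_e \<eta> Ce lam) - cost V E Ci Ce mq eq
      \<le> (real (card V) + 2 * real (card E)) * ln d / \<eta>"
    unfolding d_def using G \<open>\<eta> > 0\<close> mq eq slack by (rule cost_mu_lam_le_same_slack)
  moreover have "cost V E Ci Ce mq eq - cost V E Ci Ce mv me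
      \<le> K * ((\<Sum>i\<in>V. \<Sum>x\<in>UNIV. \<bar>mq i x - mv i x\<bar>) + (\<Sum>e\<in>E. \<Sum>x\<in>UNIV. \<Sum>y\<in>UNIV. \<bar>eq e x y - me e x y\<bar>))"
    unfolding cost_diff by (rule order_trans[OF abs_ge_self abs_cost_le]) (use K in auto)
  moreover have "\<dots> \<le> K * ((\<Sum>i\<in>V. 2 * t) + (\<Sum>e\<in>E. 2 * t + sn e (fst e) + sn e (snd e)))"
    using dist \<open>0 \<le> K\<close> by (intro mult_left_mono add_mono sum_mono) auto
  moreover have "\<dots> = 4 * d * \<delta> * (real (card V) + real (card E)) * K + K * (\<Sum>e\<in>E. sn e (fst e) + sn e (snd e))"
    by (simp add: t_def sum.distrib algebra_simps)
  ultimately show ?thesis by linarith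
qed

lemma cost_mu_lam_sub_L2_le:
  fixes V :: "'v set" and E :: "('v \<times> 'v) set"
    and Ci :: "'v \<Rightarrow> 'x::finite \<Rightarrow> real" and Ce :: "'v \<times> 'v \<Rightarrow> 'x \<Rightarrow> 'x \<Rightarrow> real"
    and \<eta> :: real and lam :: "'v \<times> 'v \<Rightarrow> 'v \<Rightarrow> 'x \<Rightarrow> real" and K d \<delta> :: real
  defines "d \<equiv> real (card (UNIV :: 'x set))" and "sn \<equiv> slack_norm \<eta> E Ci Ce lam"
  assumes G: "graph_ok V E" and "\<eta> > 0" and L2: "L2 V E mv me"
    and K: "\<And>i x. i \<in> V \<Longrightarrow> \<bar>Ci i x\<bar> \<le> K" "\<And>e x y. e \<in> E \<Longrightarrow> \<bar>Ce e x y\<bar> \<le> K"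
    and "0 \<le> K"
    and \<delta>: "\<And>e i. e \<in> E \<Longrightarrow> i = fst e \<or> i = snd e \<Longrightarrow> sn e i \<le> \<delta>"
    and "0 \<le> \<delta>"
  shows "cost V E Ci Ce (mu_lam_v \<eta> E Ci lam) (mu_lam_e \<eta> Ce lam) - cost V E Ci Ce mv me
    \<le> 4 * d * \<delta> * (real (card V) + real (card E)) * K + K * (\<Sum>e\<in>E. sn e (fst e) + sn e (snd e))
       + (real (card V) + 2 * real (card E)) * ln d / \<eta>"
proof (cases "2 * d * \<delta> \<le> 1")
  case True
  with G \<open>\<eta> > 0\<close> L2 K \<open>0 \<le> K\<close> \<delta> \<open>0 \<le> \<delta>\<close> show ?thesis
    unfolding d_def sn_def by (rule cost_mu_lam_sub_L2_le_small_slack)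
next
  \<comment> \<open>for large slack the bound is already implied by \<open>|cost| \<le> (n + m) K\<close> at both points\<close>
  case False
  have "\<bar>cost V E Ci Ce (mu_lam_v \<eta> E Ci lam) (mu_lam_e \<eta> Ce lam)\<bar> \<le> (real (card V) + real (card E)) * K"
    using K sum_mu_lam_v sum_mu_lam_e less_imp_le[OF mu_lam_v_pos] less_imp_le[OF mu_lam_e_pos]
    by (intro abs_cost_distribution_le) (auto simp: simplex_def)
  moreover have "\<bar>cost V E Ci Ce mv me\<bar> \<le> (real (card V) + real (card E)) * K"
    using K L2 L2_edge_mass[OF G L2] by (intro abs_cost_distribution_le) (auto simp: L2_def)
  moreover have "(real (card V) + real (card E)) * K * 1 \<le> (real (card V) + real (card E)) * K * (2 * d * \<delta>)"
    using False \<open>0 \<le> K\<close> by (intro mult_left_mono) auto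
  moreover have "K * (\<Sum>e\<in>E. sn e (fst e) + sn e (snd e)) \<ge> 0"
    using \<open>0 \<le> K\<close> by (simp add: sn_def slack_norm_nonneg sum_nonneg)
  moreover have "(real (card V) + 2 * real (card E)) * ln d / \<eta> \<ge> 0"
    using \<open>\<eta> > 0\<close> card_UNIV_pos[where 'a = 'x] by (simp add: d_def)
  ultimately show ?thesis by (simp add: algebra_simps)
qed

lemma cost_proj_sub_mu_lam_le:
  fixes K :: real
  assumes G: "graph_ok V E"
    and K: "\<And>i x. i \<in> V \<Longrightarrow> \<bar>Ci i x\<bar> \<le> K" "\<And>e x y. e \<in> E \<Longrightarrow> \<bar>Ce e x y\<bar> \<le> K"
    and "0 \<le> K"
  shows "cost V E Ci Ce (proj_v \<eta> E Ci lam) (proj_e \<eta> E Ci Ce lam)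
      - cost V E Ci Ce (mu_lam_v \<eta> E Ci lam) (mu_lam_e \<eta> Ce lam)
    \<le> 2 * K * (\<Sum>e\<in>E. slack_norm \<eta> E Ci Ce lam e (fst e) + slack_norm \<eta> E Ci Ce lam e (snd e))"
proof -
  define mv where "mv = mu_lam_v \<eta> E Ci lam"
  define me where "me = mu_lam_e \<eta> Ce lam"
  have "cost V E Ci Ce (proj_v \<eta> E Ci lam) (proj_e \<eta> E Ci Ce lam) - cost V E Ci Ce mv me
      \<le> K * ((\<Sum>i\<in>V. \<Sum>x\<in>UNIV. \<bar>mv i x - mv i x\<bar>)
            + (\<Sum>e\<in>E. \<Sum>x\<in>UNIV. \<Sum>y\<in>UNIV. \<bar>proj_e \<eta> E Ci Ce lam e x y - me e x y\<bar>))"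
    unfolding cost_diff proj_v_def mv_def[symmetric]
    by (rule order_trans[OF abs_ge_self abs_cost_le]) (use K in auto)
  also have "\<dots> \<le> K * (0 + (\<Sum>e\<in>E. 2 * (slack_norm \<eta> E Ci Ce lam e (fst e) + slack_norm \<eta> E Ci Ce lam e (snd e))))"
  proof (intro mult_left_mono add_mono sum_mono \<open>0 \<le> K\<close>)
    fix e assume "e \<in> E"
    have "(\<Sum>x\<in>UNIV. \<Sum>y\<in>UNIV. \<bar>round_map (me e) (mv (fst e)) (mv (snd e)) x y - me e x y\<bar>)
      \<le> 2 * ((\<Sum>x\<in>UNIV. \<bar>(\<Sum>y\<in>UNIV. me e x y) - mv (fst e) x\<bar>)
             + (\<Sum>y\<in>UNIV. \<bar>(\<Sum>x\<in>UNIV. me e x y) - mv (snd e) y\<bar>))"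
      by (rule round_map_l1_dist_le)
        (simp_all add: mv_def me_def less_imp_le[OF mu_lam_v_pos] less_imp_le[OF mu_lam_e_pos]
          sum_mu_lam_v sum_mu_lam_e)
    then show "(\<Sum>x\<in>UNIV. \<Sum>y\<in>UNIV. \<bar>proj_e \<eta> E Ci Ce lam e x y - me e x y\<bar>)
        \<le> 2 * (slack_norm \<eta> E Ci Ce lam e (fst e) + slack_norm \<eta> E Ci Ce lam e (snd e))"
      using graph_ok_edge(3)[OF G \<open>e \<in> E\<close>]
      by (simp add: proj_e_def slack_norm_def S_lam_def mv_def me_def)
  qed simp
  finally show ?thesis by (simp add: mv_def me_def sum_distrib_left algebra_simps)
qed

lemma cost_proj_sub_L2_le:
  fixes V :: "'v set" and E :: "('v \<times> 'v) set"
    and Ci :: "'v \<Rightarrow> 'x::finite \<Rightarrow> real" and Ce :: "'v \<times> 'v \<Rightarrow> 'x \<Rightarrow> 'x \<Rightarrow> real"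
    and \<eta> :: real and lam :: "'v \<times> 'v \<Rightarrow> 'v \<Rightarrow> 'x \<Rightarrow> real" and K n m d \<delta> S :: real
  defines "n \<equiv> real (card V)" and "m \<equiv> real (card E)" and "d \<equiv> real (card (UNIV :: 'x set))"
    and "S \<equiv> (\<Sum>e\<in>E. slack_norm \<eta> E Ci Ce lam e (fst e) + slack_norm \<eta> E Ci Ce lam e (snd e))"
  assumes G: "graph_ok V E" and "\<eta> > 0" and L2: "L2 V E mv me"
    and K: "\<And>i x. i \<in> V \<Longrightarrow> \<bar>Ci i x\<bar> \<le> K" "\<And>e x y. e \<in> E \<Longrightarrow> \<bar>Ce e x y\<bar> \<le> K"
    and "0 \<le> K"
    and \<delta>: "\<And>e i. e \<in> E \<Longrightarrow> i = fst e \<or> i = snd e \<Longrightarrow> slack_norm \<eta> E Ci Ce lam e i \<le> \<delta>"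
    and "0 \<le> \<delta>"
  shows "cost V E Ci Ce (proj_v \<eta> E Ci lam) (proj_e \<eta> E Ci Ce lam) - cost V E Ci Ce mv me
    \<le> 16 * (m + n) * d * K * \<delta> + 4 * K * S + (n * ln d + 2 * m * ln d) / \<eta>"
proof -
  have "cost V E Ci Ce (proj_v \<eta> E Ci lam) (proj_e \<eta> E Ci Ce lam)
      - cost V E Ci Ce (mu_lam_v \<eta> E Ci lam) (mu_lam_e \<eta> Ce lam) \<le> 2 * K * S"
    unfolding S_def using G K \<open>0 \<le> K\<close> by (rule cost_proj_sub_mu_lam_le)
  moreover have "cost V E Ci Ce (mu_lam_v \<eta> E Ci lam) (mu_lam_e \<eta> Ce lam) - cost V E Ci Ce mv me
      \<le> 4 * d * \<delta> * (n + m) * K + K * S + (n + 2 * m) * ln d / \<eta>"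
    unfolding n_def m_def d_def S_def
    using G \<open>\<eta> > 0\<close> L2 K \<open>0 \<le> K\<close> \<delta> \<open>0 \<le> \<delta>\<close> by (rule cost_mu_lam_sub_L2_le)
  moreover have "0 \<le> d * \<delta> * (n + m) * K" "0 \<le> K * S"
    using \<open>0 \<le> \<delta>\<close> \<open>0 \<le> K\<close> by (simp_all add: n_def m_def d_def S_def slack_norm_nonneg sum_nonneg)
  moreover have "16 * (m + n) * d * K * \<delta> = 16 * (d * \<delta> * (n + m) * K)"
    and "(n + 2 * m) * ln d / \<eta> = (n * ln d + 2 * m * ln d) / \<eta>"
    by (simp_all add: algebra_simps)
  ultimately show ?thesis by (simp add: algebra_simps)
qed

theorem proposition4:
  fixes V :: "'v set" and E :: "('v \<times> 'v) set"
    and Ci :: "'v \<Rightarrow> 'x::finite \<Rightarrow> real" and Ce :: "'v \<times> 'v \<Rightarrow> 'x \<Rightarrow> 'x \<Rightarrow> real"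
    and \<eta> :: real and lam :: "'v \<times> 'v \<Rightarrow> 'v \<Rightarrow> 'x \<Rightarrow> real"
    and mv_opt :: "'v \<Rightarrow> 'x \<Rightarrow> real" and me_opt :: "'v \<times> 'v \<Rightarrow> 'x \<Rightarrow> 'x \<Rightarrow> real"
  assumes G: "graph_ok V E"
    and d2: "card (UNIV :: 'x set) \<ge> 2"
    and eta: "\<eta> > 0"
    and opt_in: "L2 V E mv_opt me_opt"
    and opt_min: "\<forall>mv me. L2 V E mv me \<longrightarrow> cost V E Ci Ce mv_opt me_opt \<le> cost V E Ci Ce mv me"
  shows
    "let n = real (card V); m = real (card E); d = real (card (UNIV :: 'x set));
         Cn = cost_norm V E Ci Ce;
         \<delta> = Max {slack_norm \<eta> E Ci Ce lam e i | e i. e \<in> E \<and> (i = fst e \<or> i = snd e)}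
     in cost V E Ci Ce (proj_v \<eta> E Ci lam) (proj_e \<eta> E Ci Ce lam)
          - cost V E Ci Ce mv_opt me_opt
        \<le> 16 * (m + n) * d * Cn * \<delta>
           + 4 * Cn * (\<Sum>e\<in>E. slack_norm \<eta> E Ci Ce lam e (fst e) + slack_norm \<eta> E Ci Ce lam e (snd e))
           + (n * ln d + 2 * m * ln d) / \<eta>"
proof (cases "V = {}")
  case True
  then have "E = {}" using G by (auto simp: graph_ok_def)
  with True show ?thesis by (simp add: cost_def Let_def)
next
  case False
  then obtain e0 where "e0 \<in> E" using G by (fastforce simp: graph_ok_def)
  define \<delta> where "\<delta> = Max {slack_norm \<eta> E Ci Ce lam e i | e i. e \<in> E \<and> (i = fst e \<or> i = snd e)}"
  have \<delta>: "slack_norm \<eta> E Ci Ce lam e i \<le> \<delta>" if "e \<in> E" "i = fst e \<or> i = snd e" for e i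
    unfolding \<delta>_def using G that by (rule slack_norm_le_Max)
  have "0 \<le> \<delta>" using order_trans[OF slack_norm_nonneg \<delta>[OF \<open>e0 \<in> E\<close>]] by blast
  have Cn: "\<And>i x. i \<in> V \<Longrightarrow> \<bar>Ci i x\<bar> \<le> cost_norm V E Ci Ce"
    "\<And>e x y. e \<in> E \<Longrightarrow> \<bar>Ce e x y\<bar> \<le> cost_norm V E Ci Ce"
    by (fact cost_norm_ge[OF G])+
  then have "0 \<le> cost_norm V E Ci Ce" using \<open>e0 \<in> E\<close> by (meson abs_ge_zero order_trans)
  show ?thesis
    unfolding Let_def \<delta>_def[symmetric]
    using G eta opt_in Cn \<open>0 \<le> cost_norm V E Ci Ce\<close> \<delta> \<open>0 \<le> \<delta>\<close> by (rule cost_proj_sub_L2_le)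
qed

end
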